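(* Let $c,g,e\in\mathbb{R}$, $h\in(0,1]$, $\tau>0$, and let $\theta^j=(\theta^j_i)_{i\in\mathbb{Z}}\in\ell^2(\mathbb{Z})$. Let $T^{j+1}$ be the operator on $\ell^2(\mathbb{Z})$ with matrix entries $$(T^{j+1})_{i,r}=\delta_{i,r}-\frac{c\tau}{2h}(\delta_{i+1,r}-\delta_{i-1,r})-\frac{g\tau}{2h}\Big[\theta^j_i(\delta_{i+1,r}-\delta_{i-1,r})+\delta_{i,r}(\theta^j_{i+1}-\theta^j_{i-1})\Big]-\frac{e\tau}{2h^3}\big[\delta_{i+2,r}-2\delta_{i+1,r}+2\delta_{i-1,r}-\delta_{i-2,r}\big],$$ i.e. the Jacobian $\partial\theta^{j+1}_i/\partial\theta^j_r$ of the one-step map of the scheme $$\frac{\theta^{j+1}_i-\theta^j_i}{\tau}+c\frac{\theta^j_{i+1}-\theta^j_{i-1}}{2h}+g\,\theta^j_i\frac{\theta^j_{i+1}-\theta^j_{i-1}}{2h}+e\frac{\theta^j_{i+2}-2\theta^j_{i+1}+2\theta^j_{i-1}-\theta^j_{i-2}}{2h^3}=0 .$$ Suppose $\tau\le K h^6$ for some constant $K$, and $\sup_i|\theta^j_i|\le B$, $\sup_i|\theta^j_{i+1}-\theta^j_i|/h\le B$. Then there is a constant $a$ depending only on $c,g,e,K,B$ (and not on $h,\tau$) such that the spectral norm satisfies $\|T^{j+1}\|\le e^{a\tau}$.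
   Context: $\delta_{i,r}$ is the Kronecker delta; the spectral norm is the operator norm on $\ell^2(\mathbb{Z})$. *)

theory Defs
  imports "HOL-Analysis.Analysis"
begin

definition kdelta :: "int \<Rightarrow> int \<Rightarrow> real" where
  "kdelta i r = (if i = r then 1 else 0)"

definition in_l2 :: "(int \<Rightarrow> real) \<Rightarrow> bool" where
  "in_l2 x \<longleftrightarrow> (\<lambda>i. (x i)\<^sup>2) summable_on UNIV"

definition l2norm :: "(int \<Rightarrow> real) \<Rightarrow> real" where
  "l2norm x = sqrt (\<Sum>\<^sub>\<infinity>i. (x i)\<^sup>2)"

definition Tmat :: "real \<Rightarrow> real \<Rightarrow> real \<Rightarrow> real \<Rightarrow> real \<Rightarrow> (int \<Rightarrow> real) \<Rightarrow> int \<Rightarrow> int \<Rightarrow> real" where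
  "Tmat c g e h \<tau> \<theta> i r =
     kdelta i r
     - c * \<tau> / (2 * h) * (kdelta (i + 1) r - kdelta (i - 1) r)
     - g * \<tau> / (2 * h) * (\<theta> i * (kdelta (i + 1) r - kdelta (i - 1) r)
                           + kdelta i r * (\<theta> (i + 1) - \<theta> (i - 1)))
     - e * \<tau> / (2 * h ^ 3) * (kdelta (i + 2) r - 2 * kdelta (i + 1) r
                                + 2 * kdelta (i - 1) r - kdelta (i - 2) r)"

definition Top :: "real \<Rightarrow> real \<Rightarrow> real \<Rightarrow> real \<Rightarrow> real \<Rightarrow> (int \<Rightarrow> real) \<Rightarrow> (int \<Rightarrow> real) \<Rightarrow> (int \<Rightarrow> real)" where
  "Top c g e h \<tau> \<theta> x = (\<lambda>i. \<Sum>\<^sub>\<infinity>r. Tmat c g e h \<tau> \<theta> i r * x r)"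

end

(* The Jacobian is T = I - tau L, where L is the linearisation of the spatial part of the scheme,
   so |Tx|^2 = |x|^2 - 2 tau <x, Lx> + tau^2 |Lx|^2.  Pointwise, x_i (Lx)_i is a discrete divergence
   Phi_i - Phi_(i-1), which sums to zero, plus g/(2h) times a defect coming from the variable
   coefficient theta; as theta has increments of size B h, this term costs only 3 |g| B times the
   local energy of x near i.  The stencil of h^3 L has coefficients bounded by
   M = |c| + |g| B + |e|, so tau^2 |Lx|^2 <= 25 (tau/h^6) tau M^2 |x|^2 <= 25 K M^2 tau |x|^2
   under tau <= K h^6.
   Hence |Tx|^2 <= (1 + C tau) |x|^2 <= exp (C tau) |x|^2. *)

theory Submission
  imports Defs
begin

lemma summable_on_diff:
  fixes f g :: "'a \<Rightarrow> 'b::topological_ab_group_add"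
  assumes "f summable_on A" "g summable_on A"
  shows "(\<lambda>x. f x - g x) summable_on A"
  using summable_on_add[OF assms(1) summable_on_uminus[THEN iffD2, OF assms(2)]] by simp

lemma infsum_diff:
  fixes f g :: "'a \<Rightarrow> 'b::{topological_ab_group_add,t2_space}"
  assumes "f summable_on A" "g summable_on A"
  shows "(\<Sum>\<^sub>\<infinity>x\<in>A. f x - g x) = (\<Sum>\<^sub>\<infinity>x\<in>A. f x) - (\<Sum>\<^sub>\<infinity>x\<in>A. g x)"
  using infsum_add[OF assms(1) summable_on_uminus[THEN iffD2, OF assms(2)]] infsum_uminus[of g A]
  by simp

lemma bij_int_shift: "bij (\<lambda>i::int. i + k)"
  by (rule bijI') (auto intro: exI[of _ "_ - k"])

lemma summable_on_int_shift:
  fixes f :: "int \<Rightarrow> 'b::topological_comm_monoid_add"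
  shows "(\<lambda>i. f (i + k)) summable_on UNIV \<longleftrightarrow> f summable_on UNIV"
  using summable_on_reindex_bij_betw[OF bij_int_shift[of k], of f] by simp

lemma infsum_int_shift:
  fixes f :: "int \<Rightarrow> 'b::{topological_comm_monoid_add,t2_space}"
  shows "(\<Sum>\<^sub>\<infinity>i. f (i + k)) = (\<Sum>\<^sub>\<infinity>i. f i)"
  using infsum_reindex_bij_betw[OF bij_int_shift[of k], of f] by simp

lemma infsum_int_telescope:
  fixes f :: "int \<Rightarrow> 'b::{topological_ab_group_add,t2_space}"
  assumes "f summable_on UNIV"
  shows "(\<Sum>\<^sub>\<infinity>i. f i - f (i - k)) = 0"
  using infsum_diff[OF assms summable_on_int_shift[of f "-k", THEN iffD2, OF assms]]
    infsum_int_shift[of f "-k"]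
  by simp

lemma in_l2_shift: "in_l2 (\<lambda>i. x (i + k)) \<longleftrightarrow> in_l2 x"
  unfolding in_l2_def using summable_on_int_shift[of "\<lambda>i. (x i)\<^sup>2" k] by simp

lemma in_l2_dominated:
  assumes "P summable_on UNIV" "\<And>i. (y i)\<^sup>2 \<le> P i"
  shows "in_l2 y" "(\<Sum>\<^sub>\<infinity>i. (y i)\<^sup>2) \<le> (\<Sum>\<^sub>\<infinity>i. P i)"
proof -
  show l2: "in_l2 y"
    unfolding in_l2_def by (rule summable_on_comparison_test[OF assms(1)]) (use assms(2) in auto)
  show "(\<Sum>\<^sub>\<infinity>i. (y i)\<^sup>2) \<le> (\<Sum>\<^sub>\<infinity>i. P i)"
    using l2 assms unfolding in_l2_def by (intro infsum_mono) auto
qed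

lemma abs_mult_le_sum_squares:
  fixes a b :: real
  shows "\<bar>a * b\<bar> \<le> a\<^sup>2 + b\<^sup>2"
  using sum_squares_bound[of "\<bar>a\<bar>" "\<bar>b\<bar>"] abs_ge_zero[of "a * b"]
  unfolding abs_mult power2_abs by linarith

lemma summable_on_bounded_mult_l2:
  assumes "in_l2 x" "in_l2 y" "\<And>i. \<bar>m i\<bar> \<le> M"
  shows "(\<lambda>i. m i * x i * y i) summable_on UNIV"
proof -
  have bound: "\<bar>m i * x i * y i\<bar> \<le> M * ((x i)\<^sup>2 + (y i)\<^sup>2)" for i
  proof -
    have "\<bar>m i\<bar> * \<bar>x i * y i\<bar> \<le> M * ((x i)\<^sup>2 + (y i)\<^sup>2)"
      using assms(3)[of i] abs_mult_le_sum_squares by (intro mult_mono) auto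
    then show ?thesis
      by (simp add: abs_mult mult.assoc)
  qed
  have "(\<lambda>i. M * ((x i)\<^sup>2 + (y i)\<^sup>2)) summable_on UNIV"
    using assms(1,2) unfolding in_l2_def by (intro summable_on_cmult_right summable_on_add)
  then have "(\<lambda>i. norm (m i * x i * y i)) summable_on UNIV"
    by (rule summable_on_comparison_test) (use bound in auto)
  then show ?thesis
    using summable_on_iff_abs_summable_on_real by blast
qed

lemma weighted_sum5_sq_le:
  fixes a1 a2 a3 a4 a5 z1 z2 z3 z4 z5 M :: real
  assumes "\<bar>a1\<bar> \<le> M" "\<bar>a2\<bar> \<le> M" "\<bar>a3\<bar> \<le> M" "\<bar>a4\<bar> \<le> M" "\<bar>a5\<bar> \<le> M"
  shows "(a1 * z1 + a2 * z2 + a3 * z3 + a4 * z4 + a5 * z5)\<^sup>2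
           \<le> 5 * M\<^sup>2 * (z1\<^sup>2 + z2\<^sup>2 + z3\<^sup>2 + z4\<^sup>2 + z5\<^sup>2)"
proof -
  have coef: "(a * z)\<^sup>2 \<le> M\<^sup>2 * z\<^sup>2" if "\<bar>a\<bar> \<le> M" for a z :: real
    using power_mono[OF that abs_ge_zero, of 2] by (simp add: power_mult_distrib mult_right_mono)
  have "(a1 * z1 + a2 * z2 + a3 * z3 + a4 * z4 + a5 * z5)\<^sup>2
      \<le> 5 * ((a1 * z1)\<^sup>2 + (a2 * z2)\<^sup>2 + (a3 * z3)\<^sup>2 + (a4 * z4)\<^sup>2 + (a5 * z5)\<^sup>2)"
    using sum_squared_le_sum_of_squares[of "\<lambda>k. [a1 * z1, a2 * z2, a3 * z3, a4 * z4, a5 * z5] ! k" "{0..<5}"]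
    by (simp add: numeral_eq_Suc)
  also have "\<dots> \<le> 5 * (M\<^sup>2 * z1\<^sup>2 + M\<^sup>2 * z2\<^sup>2 + M\<^sup>2 * z3\<^sup>2 + M\<^sup>2 * z4\<^sup>2 + M\<^sup>2 * z5\<^sup>2)"
    using assms by (intro mult_left_mono add_mono coef) auto
  also have "\<dots> = 5 * M\<^sup>2 * (z1\<^sup>2 + z2\<^sup>2 + z3\<^sup>2 + z4\<^sup>2 + z5\<^sup>2)"
    by (simp add: algebra_simps)
  finally show ?thesis .
qed

definition linearized_kdv ::
    "real \<Rightarrow> real \<Rightarrow> real \<Rightarrow> real \<Rightarrow> (int \<Rightarrow> real) \<Rightarrow> (int \<Rightarrow> real) \<Rightarrow> int \<Rightarrow> real" where
  "linearized_kdv c g e h \<theta> x i =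
     c / (2 * h) * (x (i + 1) - x (i - 1))
     + g / (2 * h) * (\<theta> i * (x (i + 1) - x (i - 1)) + x i * (\<theta> (i + 1) - \<theta> (i - 1)))
     + e / (2 * h ^ 3) * (x (i + 2) - 2 * x (i + 1) + 2 * x (i - 1) - x (i - 2))"

lemma Tmat_eq_linearized_kdv:
  "Tmat c g e h \<tau> \<theta> i r = kdelta i r - \<tau> * linearized_kdv c g e h \<theta> (\<lambda>j. kdelta j r) i"
  unfolding Tmat_def linearized_kdv_def by (simp add: algebra_simps)

lemma Top_eq_linearized_kdv:
  "Top c g e h \<tau> \<theta> x = (\<lambda>i. x i - \<tau> * linearized_kdv c g e h \<theta> x i)"
proof
  fix i
  have "Top c g e h \<tau> \<theta> x i = (\<Sum>\<^sub>\<infinity>r\<in>{i - 2, i - 1, i, i + 1, i + 2}. Tmat c g e h \<tau> \<theta> i r * x r)"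
    unfolding Top_def by (rule infsum_cong_neutral) (auto simp: Tmat_def kdelta_def)
  also have "\<dots> = (\<Sum>r\<in>{i - 2, i - 1, i, i + 1, i + 2}. Tmat c g e h \<tau> \<theta> i r * x r)"
    by simp
  also have "\<dots> = x i - \<tau> * linearized_kdv c g e h \<theta> x i"
    unfolding Tmat_eq_linearized_kdv linearized_kdv_def by (simp add: kdelta_def algebra_simps)
  finally show "Top c g e h \<tau> \<theta> x i = x i - \<tau> * linearized_kdv c g e h \<theta> x i" .
qed

definition kdv_flux ::
    "real \<Rightarrow> real \<Rightarrow> real \<Rightarrow> real \<Rightarrow> (int \<Rightarrow> real) \<Rightarrow> (int \<Rightarrow> real) \<Rightarrow> int \<Rightarrow> real" where
  "kdv_flux c g e h \<theta> x i =
     (c / (2 * h) - e / h ^ 3) * x i * x (i + 1)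
     + e / (2 * h ^ 3) * (x i * x (i + 2) + x (i - 1) * x (i + 1))
     + g / (2 * h) * \<theta> i * x i * x (i + 1)"

definition kdv_defect :: "(int \<Rightarrow> real) \<Rightarrow> (int \<Rightarrow> real) \<Rightarrow> int \<Rightarrow> real" where
  "kdv_defect \<theta> x i = (x i)\<^sup>2 * (\<theta> (i + 1) - \<theta> (i - 1)) - (\<theta> i - \<theta> (i - 1)) * x (i - 1) * x i"

definition local_energy :: "(int \<Rightarrow> real) \<Rightarrow> int \<Rightarrow> real" where
  "local_energy x i = (x (i - 2))\<^sup>2 + (x (i - 1))\<^sup>2 + (x i)\<^sup>2 + (x (i + 1))\<^sup>2 + (x (i + 2))\<^sup>2"

lemma linearized_kdv_energy_identity:
  "x i * linearized_kdv c g e h \<theta> x i =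
     kdv_flux c g e h \<theta> x i - kdv_flux c g e h \<theta> x (i - 1)
     + g / (2 * h) * kdv_defect \<theta> x i"
proof -
  have "i - 1 + 2 = i + 1" "i - 1 - 1 = i - 2" by simp_all
  then show ?thesis
    by (simp add: linearized_kdv_def kdv_flux_def kdv_defect_def algebra_simps power2_eq_square)
qed

lemma abs_kdv_defect_le:
  assumes "0 < h" and d\<theta>: "\<forall>i. \<bar>\<theta> (i + 1) - \<theta> i\<bar> \<le> B * h"
  shows "\<bar>kdv_defect \<theta> x i\<bar> \<le> 3 * B * h * local_energy x i"
proof -
  have left_step: "\<bar>\<theta> i - \<theta> (i - 1)\<bar> \<le> B * h"
    using d\<theta>[rule_format, of "i - 1"] by simp
  have central_step: "\<bar>\<theta> (i + 1) - \<theta> (i - 1)\<bar> \<le> 2 * B * h"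
    using d\<theta>[rule_format, of i] left_step by linarith
  have "\<bar>\<theta> i - \<theta> (i - 1)\<bar> * \<bar>x (i - 1) * x i\<bar> \<le> B * h * ((x (i - 1))\<^sup>2 + (x i)\<^sup>2)"
    using left_step abs_mult_le_sum_squares by (intro mult_mono) (auto intro: order_trans[OF abs_ge_zero])
  moreover have "\<bar>(x i)\<^sup>2 * (\<theta> (i + 1) - \<theta> (i - 1))\<bar> \<le> (x i)\<^sup>2 * (2 * B * h)"
    using central_step by (simp add: abs_mult mult_left_mono)
  ultimately have "\<bar>kdv_defect \<theta> x i\<bar> \<le> (x i)\<^sup>2 * (2 * B * h) + B * h * ((x (i - 1))\<^sup>2 + (x i)\<^sup>2)"
    using abs_triangle_ineq4[of "(x i)\<^sup>2 * (\<theta> (i + 1) - \<theta> (i - 1))" "(\<theta> i - \<theta> (i - 1)) * x (i - 1) * x i"]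
    unfolding kdv_defect_def by (simp add: abs_mult mult.assoc)
  also have "\<dots> = B * h * ((x (i - 1))\<^sup>2 + 3 * (x i)\<^sup>2)"
    by (simp add: algebra_simps)
  also have "\<dots> \<le> B * h * (3 * local_energy x i)"
    using order_trans[OF abs_ge_zero left_step] unfolding local_energy_def
    by (intro mult_left_mono) (simp_all add: algebra_simps add_nonneg_nonneg)
  finally show ?thesis
    by (simp add: mult_ac)
qed

lemma scaled_linearized_kdv_sq_le:
  assumes "0 < h" "h \<le> 1" and \<theta>: "\<forall>i. \<bar>\<theta> i\<bar> \<le> B"
    and d\<theta>: "\<forall>i. \<bar>\<theta> (i + 1) - \<theta> i\<bar> \<le> B * h"
  shows "(h ^ 3 * linearized_kdv c g e h \<theta> x i)\<^sup>2
           \<le> 5 * (\<bar>c\<bar> + \<bar>g\<bar> * B + \<bar>e\<bar>)\<^sup>2 * local_energy x i"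
proof -
  define M where "M = \<bar>c\<bar> + \<bar>g\<bar> * B + \<bar>e\<bar>"
  define u where "u = h\<^sup>2 * (c + g * \<theta> i) / 2 - e"
  define v where "v = g * h\<^sup>2 * (\<theta> (i + 1) - \<theta> (i - 1)) / 2"
  have B: "0 \<le> B"
    using \<theta> abs_ge_zero order_trans by blast
  have h2: "0 \<le> h\<^sup>2" "h\<^sup>2 \<le> 1"
    using assms(1,2) by (auto simp: power_le_one)
  have "\<bar>c + g * \<theta> i\<bar> \<le> \<bar>c\<bar> + \<bar>g\<bar> * B"
    using abs_triangle_ineq[of c "g * \<theta> i"] mult_left_mono[OF \<theta>[rule_format, of i], of "\<bar>g\<bar>"]
    by (simp add: abs_mult)
  then have cg: "h\<^sup>2 * \<bar>c + g * \<theta> i\<bar> \<le> 1 * (\<bar>c\<bar> + \<bar>g\<bar> * B)"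
    using h2 by (intro mult_mono) auto
  have gB: "0 \<le> \<bar>g\<bar> * B"
    using B by simp
  have "\<bar>u\<bar> \<le> h\<^sup>2 * \<bar>c + g * \<theta> i\<bar> / 2 + \<bar>e\<bar>"
    unfolding u_def using abs_triangle_ineq4[of "h\<^sup>2 * (c + g * \<theta> i) / 2" e]
    by (simp add: abs_mult)
  also have "\<dots> \<le> (\<bar>c\<bar> + \<bar>g\<bar> * B) / 2 + \<bar>e\<bar>"
    using cg by simp
  also have "\<dots> \<le> M"
    unfolding M_def using gB by (simp add: field_simps)
  finally have u: "\<bar>u\<bar> \<le> M" .
  have "\<bar>\<theta> (i + 1) - \<theta> (i - 1)\<bar> \<le> 2 * B"
    using d\<theta>[rule_format, of i] d\<theta>[rule_format, of "i - 1"] mult_left_le[OF assms(2) B] by simp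
  then have "h\<^sup>2 * \<bar>\<theta> (i + 1) - \<theta> (i - 1)\<bar> \<le> 1 * (2 * B)"
    using h2 by (intro mult_mono) auto
  then have "\<bar>g\<bar> * (h\<^sup>2 * \<bar>\<theta> (i + 1) - \<theta> (i - 1)\<bar>) \<le> \<bar>g\<bar> * (2 * B)"
    by (simp add: mult_left_mono)
  then have v: "\<bar>v\<bar> \<le> M"
    unfolding v_def M_def by (simp add: abs_mult)
  have expand: "h ^ 3 * linearized_kdv c g e h \<theta> x i
      = (- e / 2) * x (i - 2) + (- u) * x (i - 1) + v * x i + u * x (i + 1) + (e / 2) * x (i + 2)"
    using assms(1) by (simp add: linearized_kdv_def u_def v_def field_simps power2_eq_square power3_eq_cube)
  have "\<bar>- e / 2\<bar> \<le> M" "\<bar>- u\<bar> \<le> M" "\<bar>e / 2\<bar> \<le> M"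
    using u gB unfolding M_def by auto
  then show ?thesis
    unfolding expand local_energy_def M_def[symmetric]
    using u v by (intro weighted_sum5_sq_le)
qed

(* 3 |g| B pays for the defect, 5 K (|c| + |g| B + |e|)^2 for the term tau^2 (Lx)_i^2. *)
definition energy_growth_rate :: "real \<Rightarrow> real \<Rightarrow> real \<Rightarrow> real \<Rightarrow> real \<Rightarrow> real" where
  "energy_growth_rate c g e K B = 3 * \<bar>g\<bar> * B + 5 * K * (\<bar>c\<bar> + \<bar>g\<bar> * B + \<bar>e\<bar>)\<^sup>2"

lemma Top_sq_le:
  assumes h: "0 < h" "h \<le> 1" and \<tau>: "0 < \<tau>" "\<tau> \<le> K * h ^ 6"
    and \<theta>: "\<forall>i. \<bar>\<theta> i\<bar> \<le> B" and d\<theta>: "\<forall>i. \<bar>\<theta> (i + 1) - \<theta> i\<bar> \<le> B * h"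
  shows "(Top c g e h \<tau> \<theta> x i)\<^sup>2
           \<le> (x i)\<^sup>2 - 2 * \<tau> * (kdv_flux c g e h \<theta> x i - kdv_flux c g e h \<theta> x (i - 1))
              + \<tau> * energy_growth_rate c g e K B * local_energy x i"
proof -
  define L where "L = linearized_kdv c g e h \<theta> x i"
  define E where "E = local_energy x i"
  have "\<bar>2 * \<tau> * (g / (2 * h) * kdv_defect \<theta> x i)\<bar> = \<tau> * \<bar>g\<bar> / h * \<bar>kdv_defect \<theta> x i\<bar>"
    using h \<tau> by (simp add: abs_mult)
  also have "\<dots> \<le> \<tau> * \<bar>g\<bar> / h * (3 * B * h * E)"
    unfolding E_def using h \<tau> by (intro mult_left_mono abs_kdv_defect_le d\<theta>) auto
  also have "\<dots> = \<tau> * (3 * \<bar>g\<bar> * B) * E"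
    using h by simp
  finally have defect: "\<bar>2 * \<tau> * (g / (2 * h) * kdv_defect \<theta> x i)\<bar> \<le> \<tau> * (3 * \<bar>g\<bar> * B) * E" .
  have K: "\<tau> / h ^ 6 \<le> K"
    using h \<tau> by (simp add: pos_divide_le_eq)
  moreover have "0 < \<tau> / h ^ 6"
    using h \<tau> by simp
  ultimately have "0 \<le> K"
    by linarith
  have "\<tau>\<^sup>2 * L\<^sup>2 = \<tau> * (\<tau> / h ^ 6) * (h ^ 3 * L)\<^sup>2"
    using h by (simp add: power_mult_distrib power2_eq_square field_simps)
  also have "\<dots> \<le> \<tau> * K * (5 * (\<bar>c\<bar> + \<bar>g\<bar> * B + \<bar>e\<bar>)\<^sup>2 * E)"
    unfolding L_def E_def using h \<tau> K \<open>0 \<le> K\<close>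
    by (intro mult_mono mult_left_mono scaled_linearized_kdv_sq_le \<theta> d\<theta>) auto
  finally have stiff: "\<tau>\<^sup>2 * L\<^sup>2 \<le> \<tau> * (5 * K * (\<bar>c\<bar> + \<bar>g\<bar> * B + \<bar>e\<bar>)\<^sup>2) * E"
    by (simp add: algebra_simps)
  have "(Top c g e h \<tau> \<theta> x i)\<^sup>2 = (x i)\<^sup>2 - 2 * \<tau> * (x i * L) + \<tau>\<^sup>2 * L\<^sup>2"
    unfolding Top_eq_linearized_kdv L_def by (simp add: power2_eq_square algebra_simps)
  also have "\<dots> = (x i)\<^sup>2 - 2 * \<tau> * (kdv_flux c g e h \<theta> x i - kdv_flux c g e h \<theta> x (i - 1))
                   - 2 * \<tau> * (g / (2 * h) * kdv_defect \<theta> x i) + \<tau>\<^sup>2 * L\<^sup>2"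
    unfolding L_def linearized_kdv_energy_identity by (simp add: algebra_simps)
  finally have "(Top c g e h \<tau> \<theta> x i)\<^sup>2 = \<dots>" .
  moreover have "\<tau> * energy_growth_rate c g e K B * E
      = \<tau> * (3 * \<bar>g\<bar> * B) * E + \<tau> * (5 * K * (\<bar>c\<bar> + \<bar>g\<bar> * B + \<bar>e\<bar>)\<^sup>2) * E"
    by (simp add: energy_growth_rate_def algebra_simps)
  ultimately show ?thesis
    using defect stiff unfolding E_def by (simp only: abs_le_iff) linarith
qed

lemma kdv_flux_summable:
  assumes "in_l2 x" and \<theta>: "\<forall>i. \<bar>\<theta> i\<bar> \<le> B"
  shows "kdv_flux c g e h \<theta> x summable_on UNIV"
proof -
  have shift: "in_l2 (\<lambda>i. x (i + k))" for k
    using assms(1) in_l2_shift by blast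
  have product: "(\<lambda>i. x i * x (i + k)) summable_on UNIV" for k
    using summable_on_bounded_mult_l2[OF assms(1) shift, of "\<lambda>_. 1" 1] by simp
  have "(\<lambda>i. x (i - 1) * x (i + 1)) summable_on UNIV"
    using summable_on_int_shift[of "\<lambda>i. x i * x (i + 2)" "- 1"] product[of 2] by (simp add: add.commute)
  moreover have "(\<lambda>i. g / (2 * h) * \<theta> i * x i * x (i + 1)) summable_on UNIV"
    using \<theta> by (intro summable_on_bounded_mult_l2[OF assms(1) shift, of _ "\<bar>g / (2 * h)\<bar> * B"])
      (simp add: abs_mult divide_right_mono mult_left_mono)
  ultimately show ?thesis
    unfolding kdv_flux_def mult.assoc[of "c / (2 * h) - e / h ^ 3"]
    by (intro summable_on_add summable_on_cmult_right product)
qed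

lemma local_energy_summable:
  assumes "in_l2 x"
  shows "local_energy x summable_on UNIV"
proof -
  have "(\<lambda>i. (x (i + k))\<^sup>2) summable_on UNIV" for k
    using assms summable_on_int_shift[of "\<lambda>i. (x i)\<^sup>2" k] unfolding in_l2_def by simp
  from this[of "- 2"] this[of "- 1"] this[of 0] this[of 1] this[of 2] show ?thesis
    unfolding local_energy_def by (intro summable_on_add) simp_all
qed

lemma infsum_local_energy:
  assumes "in_l2 x"
  shows "(\<Sum>\<^sub>\<infinity>i. local_energy x i) = 5 * (\<Sum>\<^sub>\<infinity>i. (x i)\<^sup>2)"
proof -
  have shift: "(\<lambda>i. (x (i + k))\<^sup>2) summable_on UNIV" for k
    using assms summable_on_int_shift[of "\<lambda>i. (x i)\<^sup>2" k] unfolding in_l2_def by simp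
  have shift': "(\<lambda>i. (x (i - k))\<^sup>2) summable_on UNIV" for k
    using shift[of "- k"] by simp
  have sum_shift: "(\<Sum>\<^sub>\<infinity>i. (x (i + k))\<^sup>2) = (\<Sum>\<^sub>\<infinity>i. (x i)\<^sup>2)" for k
    by (rule infsum_int_shift)
  have sum_shift': "(\<Sum>\<^sub>\<infinity>i. (x (i - k))\<^sup>2) = (\<Sum>\<^sub>\<infinity>i. (x i)\<^sup>2)" for k
    using sum_shift[of "- k"] by simp
  show ?thesis
    unfolding local_energy_def
    using shift[of 0] by (simp add: infsum_add summable_on_add shift shift' sum_shift sum_shift')
qed

lemma Top_energy_estimate:
  assumes "0 < h" "h \<le> 1" "0 < \<tau>" "\<tau> \<le> K * h ^ 6"
    and \<theta>: "\<forall>i. \<bar>\<theta> i\<bar> \<le> B" and "\<forall>i. \<bar>\<theta> (i + 1) - \<theta> i\<bar> \<le> B * h"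
    and x: "in_l2 x"
  shows "in_l2 (Top c g e h \<tau> \<theta> x)"
    and "(\<Sum>\<^sub>\<infinity>i. (Top c g e h \<tau> \<theta> x i)\<^sup>2)
           \<le> (1 + 5 * \<tau> * energy_growth_rate c g e K B) * (\<Sum>\<^sub>\<infinity>i. (x i)\<^sup>2)"
proof -
  define \<Phi> where "\<Phi> = kdv_flux c g e h \<theta> x"
  define P where "P i = (x i)\<^sup>2 - 2 * \<tau> * (\<Phi> i - \<Phi> (i - 1))
                        + \<tau> * energy_growth_rate c g e K B * local_energy x i" for i
  have dominated: "(Top c g e h \<tau> \<theta> x i)\<^sup>2 \<le> P i" for i
    unfolding P_def \<Phi>_def using assms by (intro Top_sq_le)
  have sq: "(\<lambda>i. (x i)\<^sup>2) summable_on UNIV"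
    using x unfolding in_l2_def .
  have \<Phi>: "\<Phi> summable_on UNIV"
    unfolding \<Phi>_def using x \<theta> by (rule kdv_flux_summable)
  have telescope: "(\<lambda>i. \<Phi> i - \<Phi> (i - 1)) summable_on UNIV"
    using summable_on_diff[OF \<Phi> summable_on_int_shift[of \<Phi> "- 1", THEN iffD2, OF \<Phi>]] by simp
  have P: "P summable_on UNIV"
    unfolding P_def using local_energy_summable[OF x]
    by (intro summable_on_add summable_on_diff summable_on_cmult_right sq telescope)
  have "(\<Sum>\<^sub>\<infinity>i. P i) = (\<Sum>\<^sub>\<infinity>i. (x i)\<^sup>2) - 2 * \<tau> * (\<Sum>\<^sub>\<infinity>i. \<Phi> i - \<Phi> (i - 1))
                          + \<tau> * energy_growth_rate c g e K B * (\<Sum>\<^sub>\<infinity>i. local_energy x i)"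
    unfolding P_def using local_energy_summable[OF x]
    by (simp add: infsum_add infsum_diff summable_on_add summable_on_diff summable_on_cmult_right
        infsum_cmult_right' sq telescope)
  also have "\<dots> = (1 + 5 * \<tau> * energy_growth_rate c g e K B) * (\<Sum>\<^sub>\<infinity>i. (x i)\<^sup>2)"
    using infsum_int_telescope[OF \<Phi>, of 1] infsum_local_energy[OF x] by (simp add: algebra_simps)
  finally have "(\<Sum>\<^sub>\<infinity>i. P i) = (1 + 5 * \<tau> * energy_growth_rate c g e K B) * (\<Sum>\<^sub>\<infinity>i. (x i)\<^sup>2)" .
  then show "in_l2 (Top c g e h \<tau> \<theta> x)"
    and "(\<Sum>\<^sub>\<infinity>i. (Top c g e h \<tau> \<theta> x i)\<^sup>2)
           \<le> (1 + 5 * \<tau> * energy_growth_rate c g e K B) * (\<Sum>\<^sub>\<infinity>i. (x i)\<^sup>2)"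
    using in_l2_dominated[OF P dominated] by simp_all
qed

lemma l2norm_le_exp_half:
  assumes "(\<Sum>\<^sub>\<infinity>i. (y i)\<^sup>2) \<le> (1 + t) * (\<Sum>\<^sub>\<infinity>i. (x i)\<^sup>2)"
  shows "l2norm y \<le> exp (t / 2) * l2norm x"
proof -
  have "0 \<le> (\<Sum>\<^sub>\<infinity>i. (x i)\<^sup>2)"
    by (rule infsum_nonneg) simp
  then have "(1 + t) * (\<Sum>\<^sub>\<infinity>i. (x i)\<^sup>2) \<le> exp t * (\<Sum>\<^sub>\<infinity>i. (x i)\<^sup>2)"
    by (intro mult_right_mono exp_ge_add_one_self)
  also have "exp t = (exp (t / 2))\<^sup>2"
    by (simp add: power2_eq_square flip: exp_add)
  finally have "l2norm y \<le> sqrt ((exp (t / 2))\<^sup>2 * (\<Sum>\<^sub>\<infinity>i. (x i)\<^sup>2))"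
    unfolding l2norm_def using assms by (intro real_sqrt_le_mono) simp
  also have "\<dots> = exp (t / 2) * l2norm x"
    unfolding l2norm_def by (simp add: real_sqrt_mult)
  finally show ?thesis .
qed

theorem mainTheorem3:
  fixes c g e K B :: real
  shows "\<exists>a::real. \<forall>(h::real) (\<tau>::real) (\<theta>::int \<Rightarrow> real).
           0 < h \<and> h \<le> 1 \<and> 0 < \<tau> \<and> \<tau> \<le> K * h ^ 6 \<and> in_l2 \<theta>
           \<and> (\<forall>i. \<bar>\<theta> i\<bar> \<le> B) \<and> (\<forall>i. \<bar>\<theta> (i + 1) - \<theta> i\<bar> / h \<le> B)
           \<longrightarrow> (\<forall>x. in_l2 x \<longrightarrow>
                   in_l2 (Top c g e h \<tau> \<theta> x) \<and>
                   l2norm (Top c g e h \<tau> \<theta> x) \<le> exp (a * \<tau>) * l2norm x)"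
proof (intro exI[of _ "5 * energy_growth_rate c g e K B / 2"] allI impI, elim conjE)
  fix h \<tau> :: real and \<theta> x :: "int \<Rightarrow> real"
  assume h: "0 < h" "h \<le> 1" and \<tau>: "0 < \<tau>" "\<tau> \<le> K * h ^ 6"
    and \<theta>: "\<forall>i. \<bar>\<theta> i\<bar> \<le> B" and d\<theta>: "\<forall>i. \<bar>\<theta> (i + 1) - \<theta> i\<bar> / h \<le> B"
    and x: "in_l2 x"
  have "\<forall>i. \<bar>\<theta> (i + 1) - \<theta> i\<bar> \<le> B * h"
    using d\<theta> h by (simp add: pos_divide_le_eq)
  note estimate = Top_energy_estimate[OF h \<tau> \<theta> this x, of c g e]
  show "in_l2 (Top c g e h \<tau> \<theta> x) \<and>
      l2norm (Top c g e h \<tau> \<theta> x) \<le> exp (5 * energy_growth_rate c g e K B / 2 * \<tau>) * l2norm x"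
    using estimate(1) l2norm_le_exp_half[OF estimate(2)] by (simp add: mult_ac)
qed

end
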